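(* In $(\lambda\beta\eta\pi* )'$, let $t$ be a term and $z^\top$ a variable of type $\top$ not occurring in $t$. Then (a) if $t$ is reducible, then $t[*^\top:=z^\top]$ is reducible; and (b) $t[*^\top:=z^\top]\stackrel{*}{\to} t$. In particular, if $t$ has atomic type and is SN, then $t[*^\top:=z^\top]$ is SN.
   Context: Types are built from a distinguished type constant $\top$ and type variables by means of $\varphi\times\psi$ and $\varphi\to\psi$; an atomic type is $\top$ or a type variable. Terms are simply typed (each variable carries its type): the term constant $*^\top$, variables $x^\varphi$, abstractions $(\lambda x^\varphi.t^\psi)^{\varphi\to\psi}$, applications $(u^{\varphi\to\psi}v^\varphi)^\psi$, pairs $\langle u^\varphi,v^\psi\rangle^{\varphi\times\psi}$, projections $(\pi_1 t^{\varphi\times\psi})^\varphi$, $(\pi_2 t^{\varphi\times\psi})^\psi$. Terms are identified up to renaming of bound variables, written $\equiv$; $\mathrm{FV}(t)$ is the set of free variables. The set $\mathit{Iso}(\top)$ is the least set of types containing $\top$, containing $\varphi\to\tau$ whenever $\tau\in\mathit{Iso}(\top)$ ($\varphi$ arbitrary), and containing $\tau_1\times\tau_2$ whenever $\tau_1,\tau_2\in\mathit{Iso}(\top)$. For $\tau\in\mathit{Iso}(\top)$ the canonical term $*^\tau$ is: $*^\top$ the constant; $*^{\varphi\to\tau}:=\lambda x^\varphi.*^\tau$; $*^{\tau_1\times\tau_2}:=\langle *^{\tau_1},*^{\tau_2}\rangle$ (writing $*^\varphi$ presupposes $\varphi\in\mathit{Iso}(\top)$). The one-step rewrite relation $\to$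 of $(\lambda\beta\eta\pi* )'$ is the closure under arbitrary term contexts of: $(\beta)$ $(\lambda x.u)v\to u[x:=v]$; $(\pi_1)$ $\pi_1\langle u,v\rangle\to u$; $(\pi_2)$ $\pi_2\langle u,v\rangle\to v$; $(\eta)$ $\lambda x.tx\to t$ if $x\notin\mathrm{FV}(t)$; $(SP)$ $\langle\pi_1u,\pi_2u\rangle\to u$; (gentop) $u^\tau\to *^\tau$ if $\tau\in\mathit{Iso}(\top)$ and $u\not\equiv *^\tau$; $(\eta_{top})$ $\lambda x^\tau.t\,*^\tau\to t$ if $\tau\in\mathit{Iso}(\top)$, $x\notin\mathrm{FV}(t)$; $(SP_{top}1)$ $\langle\pi_1u,*^\tau\rangle\to u$ for $u$ of type $\varphi\times\tau$, $\tau\in\mathit{Iso}(\top)$; $(SP_{top}2)$ $\langle *^\tau,\pi_2u\rangle\to u$ for $u$ of type $\tau\times\psi$, $\tau\in\mathit{Iso}(\top)$. $\stackrel{*}{\to}$ is the reflexive transitive closure. A term is SN if there is no infinite $\to$-sequence starting from it. For a term $t$ and a variable $z^\top$, $t[*^\top:=z^\top]$ denotes the term obtained by replacing every occurrence of the constant $*^\top$ in $t$ by $z^\top$. Reducibility is defined by induction on types: a term of atomic type is reducible iff it is SN; a term $t$ of type $\varphi\times\psi$ is reducible iff $\pi_1t$ and $\pi_2t$ are reducible; a term $t$ of type $\varphi\to\psi$ is reducible iff $tu$ is reducible for every reducible term $u$ of type $\varphi$. *)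

theory Defs
  imports Main
begin

datatype ty = Top | TVar nat | Prod ty ty | Arr ty ty

fun atomic :: "ty \<Rightarrow> bool" where
  "atomic Top = True"
| "atomic (TVar _) = True"
| "atomic _ = False"

(* Var i \<tau> : an occurrence of a variable of type \<tau>; at binder depth d,
   if i < d it is bound by the i-th enclosing binder, otherwise it denotes
   the free variable with name (i - d) and type \<tau>. *)
datatype trm = Star | Var nat ty | Lam ty trm | App trm trm | Pair trm trm
  | P1 trm | P2 trm

(* typing; \<Gamma> lists types of enclosing binders, innermost first *)
inductive has_ty :: "ty list \<Rightarrow> trm \<Rightarrow> ty \<Rightarrow> bool" where
  typ_star: "has_ty \<Gamma> Star Top"
| typ_bvar: "i < length \<Gamma> \<Longrightarrow> \<Gamma> ! i = \<tau> \<Longrightarrow> has_ty \<Gamma> (Var i \<tau>) \<tau>"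
| typ_fvar: "length \<Gamma> \<le> i \<Longrightarrow> has_ty \<Gamma> (Var i \<tau>) \<tau>"
| typ_lam: "has_ty (\<sigma> # \<Gamma>) t \<tau> \<Longrightarrow> has_ty \<Gamma> (Lam \<sigma> t) (Arr \<sigma> \<tau>)"
| typ_app: "has_ty \<Gamma> u (Arr \<phi> \<psi>) \<Longrightarrow> has_ty \<Gamma> v \<phi> \<Longrightarrow> has_ty \<Gamma> (App u v) \<psi>"
| typ_pair: "has_ty \<Gamma> u \<phi> \<Longrightarrow> has_ty \<Gamma> v \<psi> \<Longrightarrow> has_ty \<Gamma> (Pair u v) (Prod \<phi> \<psi>)"
| typ_p1: "has_ty \<Gamma> t (Prod \<phi> \<psi>) \<Longrightarrow> has_ty \<Gamma> (P1 t) \<phi>"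
| typ_p2: "has_ty \<Gamma> t (Prod \<phi> \<psi>) \<Longrightarrow> has_ty \<Gamma> (P2 t) \<psi>"

inductive iso_top :: "ty \<Rightarrow> bool" where
  "iso_top Top"
| "iso_top \<tau> \<Longrightarrow> iso_top (Arr \<phi> \<tau>)"
| "iso_top \<tau>1 \<Longrightarrow> iso_top \<tau>2 \<Longrightarrow> iso_top (Prod \<tau>1 \<tau>2)"

(* canonical term *^\<tau> (only meaningful for \<tau> in Iso(Top)) *)
fun canon :: "ty \<Rightarrow> trm" where
  "canon Top = Star"
| "canon (Arr \<phi> \<tau>) = Lam \<phi> (canon \<tau>)"
| "canon (Prod \<tau>1 \<tau>2) = Pair (canon \<tau>1) (canon \<tau>2)"
| "canon (TVar n) = Star"

fun lift :: "nat \<Rightarrow> trm \<Rightarrow> trm" where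
  "lift k Star = Star"
| "lift k (Var i \<tau>) = (if i < k then Var i \<tau> else Var (Suc i) \<tau>)"
| "lift k (Lam \<sigma> t) = Lam \<sigma> (lift (Suc k) t)"
| "lift k (App u v) = App (lift k u) (lift k v)"
| "lift k (Pair u v) = Pair (lift k u) (lift k v)"
| "lift k (P1 t) = P1 (lift k t)"
| "lift k (P2 t) = P2 (lift k t)"

fun subst :: "trm \<Rightarrow> nat \<Rightarrow> trm \<Rightarrow> trm" where
  "subst Star k v = Star"
| "subst (Var i \<tau>) k v = (if i < k then Var i \<tau> else if i = k then v else Var (i - 1) \<tau>)"
| "subst (Lam \<sigma> t) k v = Lam \<sigma> (subst t (Suc k) (lift 0 v))"
| "subst (App a b) k v = App (subst a k v) (subst b k v)"
| "subst (Pair a b) k v = Pair (subst a k v) (subst b k v)"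
| "subst (P1 t) k v = P1 (subst t k v)"
| "subst (P2 t) k v = P2 (subst t k v)"

fun loose :: "nat \<Rightarrow> trm \<Rightarrow> bool" where
  "loose k Star = False"
| "loose k (Var i \<tau>) = (i = k)"
| "loose k (Lam \<sigma> t) = loose (Suc k) t"
| "loose k (App u v) = (loose k u \<or> loose k v)"
| "loose k (Pair u v) = (loose k u \<or> loose k v)"
| "loose k (P1 t) = loose k t"
| "loose k (P2 t) = loose k t"

(* inverse of lift, for terms where k is not loose *)
fun unlift :: "nat \<Rightarrow> trm \<Rightarrow> trm" where
  "unlift k Star = Star"
| "unlift k (Var i \<tau>) = (if i < k then Var i \<tau> else Var (i - 1) \<tau>)"
| "unlift k (Lam \<sigma> t) = Lam \<sigma> (unlift (Suc k) t)"
| "unlift k (App u v) = App (unlift k u) (unlift k v)"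
| "unlift k (Pair u v) = Pair (unlift k u) (unlift k v)"
| "unlift k (P1 t) = P1 (unlift k t)"
| "unlift k (P2 t) = P2 (unlift k t)"

fun free_occ :: "nat \<Rightarrow> ty \<Rightarrow> nat \<Rightarrow> trm \<Rightarrow> bool" where
  "free_occ z \<tau> d Star = False"
| "free_occ z \<tau> d (Var i \<sigma>) = (d \<le> i \<and> i - d = z \<and> \<sigma> = \<tau>)"
| "free_occ z \<tau> d (Lam \<sigma> t) = free_occ z \<tau> (Suc d) t"
| "free_occ z \<tau> d (App u v) = (free_occ z \<tau> d u \<or> free_occ z \<tau> d v)"
| "free_occ z \<tau> d (Pair u v) = (free_occ z \<tau> d u \<or> free_occ z \<tau> d v)"
| "free_occ z \<tau> d (P1 t) = free_occ z \<tau> d t"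
| "free_occ z \<tau> d (P2 t) = free_occ z \<tau> d t"

(* t[*^Top := z^Top], t at binder depth d *)
fun repl_star :: "nat \<Rightarrow> nat \<Rightarrow> trm \<Rightarrow> trm" where
  "repl_star z d Star = Var (z + d) Top"
| "repl_star z d (Var i \<sigma>) = Var i \<sigma>"
| "repl_star z d (Lam \<sigma> t) = Lam \<sigma> (repl_star z (Suc d) t)"
| "repl_star z d (App u v) = App (repl_star z d u) (repl_star z d v)"
| "repl_star z d (Pair u v) = Pair (repl_star z d u) (repl_star z d v)"
| "repl_star z d (P1 t) = P1 (repl_star z d t)"
| "repl_star z d (P2 t) = P2 (repl_star z d t)"

(* one-step rewriting of (\<lambda>\<beta>\<eta>\<pi>* )', closed under contexts;
   \<Gamma> = types of the binders above the redex *)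
inductive step :: "ty list \<Rightarrow> trm \<Rightarrow> trm \<Rightarrow> bool" where
  beta: "step \<Gamma> (App (Lam \<sigma> u) v) (subst u 0 v)"
| pi1: "step \<Gamma> (P1 (Pair u v)) u"
| pi2: "step \<Gamma> (P2 (Pair u v)) v"
| eta: "\<not> loose 0 t \<Longrightarrow> step \<Gamma> (Lam \<sigma> (App t (Var 0 \<sigma>))) (unlift 0 t)"
| sp: "step \<Gamma> (Pair (P1 u) (P2 u)) u"
| gentop: "has_ty \<Gamma> u \<tau> \<Longrightarrow> iso_top \<tau> \<Longrightarrow> u \<noteq> canon \<tau> \<Longrightarrow> step \<Gamma> u (canon \<tau>)"
| eta_top: "iso_top \<tau> \<Longrightarrow> \<not> loose 0 t \<Longrightarrow>
            step \<Gamma> (Lam \<tau> (App t (canon \<tau>))) (unlift 0 t)"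
| sp_top1: "has_ty \<Gamma> u (Prod \<phi> \<tau>) \<Longrightarrow> iso_top \<tau> \<Longrightarrow> step \<Gamma> (Pair (P1 u) (canon \<tau>)) u"
| sp_top2: "has_ty \<Gamma> u (Prod \<tau> \<psi>) \<Longrightarrow> iso_top \<tau> \<Longrightarrow> step \<Gamma> (Pair (canon \<tau>) (P2 u)) u"
| ctx_lam: "step (\<sigma> # \<Gamma>) t t' \<Longrightarrow> step \<Gamma> (Lam \<sigma> t) (Lam \<sigma> t')"
| ctx_app1: "step \<Gamma> u u' \<Longrightarrow> step \<Gamma> (App u v) (App u' v)"
| ctx_app2: "step \<Gamma> v v' \<Longrightarrow> step \<Gamma> (App u v) (App u v')"
| ctx_pair1: "step \<Gamma> u u' \<Longrightarrow> step \<Gamma> (Pair u v) (Pair u' v)"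
| ctx_pair2: "step \<Gamma> v v' \<Longrightarrow> step \<Gamma> (Pair u v) (Pair u v')"
| ctx_p1: "step \<Gamma> t t' \<Longrightarrow> step \<Gamma> (P1 t) (P1 t')"
| ctx_p2: "step \<Gamma> t t' \<Longrightarrow> step \<Gamma> (P2 t) (P2 t')"

abbreviation red1 :: "trm \<Rightarrow> trm \<Rightarrow> bool" where
  "red1 \<equiv> step []"

abbreviation reds :: "trm \<Rightarrow> trm \<Rightarrow> bool" where
  "reds \<equiv> red1\<^sup>*\<^sup>*"

definition SN :: "trm \<Rightarrow> bool" where
  "SN t \<longleftrightarrow> \<not> (\<exists>f. f 0 = t \<and> (\<forall>n. red1 (f n) (f (Suc n))))"

fun reducible :: "ty \<Rightarrow> trm \<Rightarrow> bool" where
  "reducible Top t = SN t"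
| "reducible (TVar n) t = SN t"
| "reducible (Prod \<phi> \<psi>) t = (reducible \<phi> (P1 t) \<and> reducible \<psi> (P2 t))"
| "reducible (Arr \<phi> \<psi>) t = (\<forall>u. has_ty [] u \<phi> \<longrightarrow> reducible \<phi> u \<longrightarrow> reducible \<psi> (App t u))"

end

theory Submission
  imports Defs
begin

text \<open>Say that \<open>a\<close> partially replaces \<open>b\<close> if \<open>a\<close> arises from \<open>b\<close> by turning some
occurrences of \<open>*\<^sup>\<top>\<close> into \<open>z\<^sup>\<top>\<close>. A step of \<open>a\<close> is matched by at least one step of \<open>b\<close>
that preserves the relation, except for a (gentop) step contracting a subterm whose counterpart
in \<open>b\<close> is already canonical; such a step removes an occurrence of \<open>z\<close>. Hence strong
normalisation transfers from \<open>b\<close> to \<open>a\<close>, and so does reducibility, by induction on the type.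
Conversely \<open>a\<close> reduces to \<open>b\<close> by gentop steps \<open>z\<^sup>\<top> \<rightarrow> *\<^sup>\<top>\<close>.\<close>

lemma accp_tranclp:
  assumes "Wellfounded.accp r a" shows "Wellfounded.accp r\<^sup>+\<^sup>+ a"
  using assms
proof (induction rule: accp_induct_rule)
  case (1 x)
  show ?case
  proof (rule accpI)
    fix y assume "r\<^sup>+\<^sup>+ y x"
    then show "Wellfounded.accp r\<^sup>+\<^sup>+ y"
    proof cases
      case r_into_trancl then show ?thesis using "1.IH" by blast
    next
      case (trancl_into_trancl w) then show ?thesis using "1.IH" accp_downward by metis
    qed
  qed
qed

lemma termip_iff_no_infinite_chain:
  "termip R a \<longleftrightarrow> \<not> (\<exists>f. f 0 = a \<and> (\<forall>n. R (f n) (f (Suc n))))"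
proof
  assume "termip R a"
  then show "\<not> (\<exists>f. f 0 = a \<and> (\<forall>n. R (f n) (f (Suc n))))"
  proof (induction rule: accp_induct_rule)
    case (1 x)
    show ?case
    proof
      assume "\<exists>f. f 0 = x \<and> (\<forall>n. R (f n) (f (Suc n)))"
      then obtain f where "f 0 = x" and chain: "\<forall>n. R (f n) (f (Suc n))" by blast
      then have "R x (f (Suc 0))" by metis
      moreover have "\<exists>g. g 0 = f (Suc 0) \<and> (\<forall>n. R (g n) (g (Suc n)))"
        using chain by (intro exI[of _ "\<lambda>n. f (Suc n)"]) simp
      ultimately show False using "1.IH" by blast
    qed
  qed
next
  assume no_chain: "\<not> (\<exists>f. f 0 = a \<and> (\<forall>n. R (f n) (f (Suc n))))"
  show "termip R a"
  proof (rule ccontr)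
    assume "\<not> termip R a"
    have "\<exists>f. \<forall>n. (\<not> termip R (f n) \<and> (n = 0 \<longrightarrow> f n = a)) \<and> R (f n) (f (Suc n))"
    proof (rule dependent_nat_choice)
      show "\<exists>x. \<not> termip R x \<and> (0 = (0::nat) \<longrightarrow> x = a)"
        using \<open>\<not> termip R a\<close> by blast
      show "\<exists>y. (\<not> termip R y \<and> (Suc n = 0 \<longrightarrow> y = a)) \<and> R x y"
        if "\<not> termip R x \<and> (n = 0 \<longrightarrow> x = a)" for x n
        using that by (auto elim: not_accp_down)
    qed
    then show False using no_chain by blast
  qed
qed

lemma termip_simulation:
  fixes S :: "'a \<Rightarrow> 'b \<Rightarrow> bool" and m :: "'a \<Rightarrow> nat"
  assumes sim: "\<And>a a' b. R' a a' \<Longrightarrow> S a b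
      \<Longrightarrow> \<exists>b'. S a' b' \<and> (R\<^sup>+\<^sup>+ b b' \<or> b' = b \<and> m a' < m a)"
    and "termip R b" and "S a b"
  shows "termip R' a"
proof -
  have "termip R\<^sup>+\<^sup>+ b"
    using accp_tranclp[OF \<open>termip R b\<close>] by (simp add: tranclp_converse)
  then have "\<forall>a. S a b \<longrightarrow> termip R' a"
  proof (induction rule: accp_induct_rule)
    case (1 b)
    have "termip R' a" if "S a b" for a
      using that
    proof (induction "m a" arbitrary: a rule: less_induct)
      case less
      show ?case
      proof (rule accpI)
        fix a' assume "R'\<inverse>\<inverse> a' a"
        then obtain b' where "S a' b'" "R\<^sup>+\<^sup>+ b b' \<or> b' = b \<and> m a' < m a"
          using sim less.prems by blast
        then show "termip R' a'" using "1.IH" less.hyps by blast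
      qed
    qed
    then show ?case by blast
  qed
  then show ?thesis using \<open>S a b\<close> by blast
qed

lemma rtranclp_map:
  assumes "\<And>x y. R x y \<Longrightarrow> S (f x) (f y)" and "R\<^sup>*\<^sup>* a b"
  shows "S\<^sup>*\<^sup>* (f a) (f b)"
  using assms(2) by induction (auto intro: assms(1) rtranclp.rtrancl_into_rtrancl)

lemma tranclp_map:
  assumes "\<And>x y. R x y \<Longrightarrow> S (f x) (f y)" and "R\<^sup>+\<^sup>+ a b"
  shows "S\<^sup>+\<^sup>+ (f a) (f b)"
  using assms(2) by induction (auto intro: assms(1) tranclp.trancl_into_trancl)

lemma steps_Lam: "(step (\<sigma> # \<Gamma>))\<^sup>*\<^sup>* a b \<Longrightarrow> (step \<Gamma>)\<^sup>*\<^sup>* (Lam \<sigma> a) (Lam \<sigma> b)"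
  by (rule rtranclp_map[where f = "Lam \<sigma>"]) (rule ctx_lam)

lemma steps_App:
  "(step \<Gamma>)\<^sup>*\<^sup>* a b \<Longrightarrow> (step \<Gamma>)\<^sup>*\<^sup>* a' b' \<Longrightarrow> (step \<Gamma>)\<^sup>*\<^sup>* (App a a') (App b b')"
proof -
  assume "(step \<Gamma>)\<^sup>*\<^sup>* a b" "(step \<Gamma>)\<^sup>*\<^sup>* a' b'"
  then have "(step \<Gamma>)\<^sup>*\<^sup>* (App a a') (App b a')" "(step \<Gamma>)\<^sup>*\<^sup>* (App b a') (App b b')"
    by (auto intro: rtranclp_map[where f = "\<lambda>x. App x a'"] rtranclp_map[where f = "App b"]
        ctx_app1 ctx_app2)
  then show ?thesis by (rule rtranclp_trans)
qed

lemma steps_Pair: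
  "(step \<Gamma>)\<^sup>*\<^sup>* a b \<Longrightarrow> (step \<Gamma>)\<^sup>*\<^sup>* a' b' \<Longrightarrow> (step \<Gamma>)\<^sup>*\<^sup>* (Pair a a') (Pair b b')"
proof -
  assume "(step \<Gamma>)\<^sup>*\<^sup>* a b" "(step \<Gamma>)\<^sup>*\<^sup>* a' b'"
  then have "(step \<Gamma>)\<^sup>*\<^sup>* (Pair a a') (Pair b a')" "(step \<Gamma>)\<^sup>*\<^sup>* (Pair b a') (Pair b b')"
    by (auto intro: rtranclp_map[where f = "\<lambda>x. Pair x a'"] rtranclp_map[where f = "Pair b"]
        ctx_pair1 ctx_pair2)
  then show ?thesis by (rule rtranclp_trans)
qed

lemma steps_P1: "(step \<Gamma>)\<^sup>*\<^sup>* a b \<Longrightarrow> (step \<Gamma>)\<^sup>*\<^sup>* (P1 a) (P1 b)"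
  by (rule rtranclp_map[where f = P1]) (rule ctx_p1)

lemma steps_P2: "(step \<Gamma>)\<^sup>*\<^sup>* a b \<Longrightarrow> (step \<Gamma>)\<^sup>*\<^sup>* (P2 a) (P2 b)"
  by (rule rtranclp_map[where f = P2]) (rule ctx_p2)

inductive repl_some_stars :: "nat \<Rightarrow> nat \<Rightarrow> trm \<Rightarrow> trm \<Rightarrow> bool" for z where
  repl: "repl_some_stars z d (Var (z + d) Top) Star"
| Star: "repl_some_stars z d Star Star"
| Var: "repl_some_stars z d (Var i \<sigma>) (Var i \<sigma>)"
| Lam: "repl_some_stars z (Suc d) a b \<Longrightarrow> repl_some_stars z d (Lam \<sigma> a) (Lam \<sigma> b)"
| App: "repl_some_stars z d a b \<Longrightarrow> repl_some_stars z d a' b'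
    \<Longrightarrow> repl_some_stars z d (App a a') (App b b')"
| Pair: "repl_some_stars z d a b \<Longrightarrow> repl_some_stars z d a' b'
    \<Longrightarrow> repl_some_stars z d (Pair a a') (Pair b b')"
| P1: "repl_some_stars z d a b \<Longrightarrow> repl_some_stars z d (P1 a) (P1 b)"
| P2: "repl_some_stars z d a b \<Longrightarrow> repl_some_stars z d (P2 a) (P2 b)"

inductive_simps repl_some_stars_simps [simp]:
  "repl_some_stars z d Star b"
  "repl_some_stars z d (Var i \<sigma>) b"
  "repl_some_stars z d (Lam \<sigma> a) b"
  "repl_some_stars z d (App a a') b"
  "repl_some_stars z d (Pair a a') b"
  "repl_some_stars z d (P1 a) b"
  "repl_some_stars z d (P2 a) b"

lemma repl_some_stars_refl: "repl_some_stars z d t t"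
  by (induction t arbitrary: d) (auto intro: repl_some_stars.intros)

lemma repl_some_stars_repl_star: "repl_some_stars z d (repl_star z d t) t"
  by (induction t arbitrary: d) (auto intro: repl_some_stars.intros)

fun free_occ_count :: "nat \<Rightarrow> ty \<Rightarrow> nat \<Rightarrow> trm \<Rightarrow> nat" where
  "free_occ_count z \<tau> d Star = 0"
| "free_occ_count z \<tau> d (Var i \<sigma>) = (if i = z + d \<and> \<sigma> = \<tau> then 1 else 0)"
| "free_occ_count z \<tau> d (Lam \<sigma> t) = free_occ_count z \<tau> (Suc d) t"
| "free_occ_count z \<tau> d (App u v) = free_occ_count z \<tau> d u + free_occ_count z \<tau> d v"
| "free_occ_count z \<tau> d (Pair u v) = free_occ_count z \<tau> d u + free_occ_count z \<tau> d v"
| "free_occ_count z \<tau> d (P1 t) = free_occ_count z \<tau> d t"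
| "free_occ_count z \<tau> d (P2 t) = free_occ_count z \<tau> d t"

lemma free_occ_count_canon: "free_occ_count z \<tau> d (canon \<sigma>) = 0"
  by (induction \<sigma> arbitrary: d) auto

lemma repl_some_stars_eq:
  "repl_some_stars z d a b \<Longrightarrow> free_occ_count z Top d a = 0 \<Longrightarrow> a = b"
  by (induction rule: repl_some_stars.induct) auto

lemma repl_some_stars_lift:
  "repl_some_stars z d a b \<Longrightarrow> k \<le> d \<Longrightarrow> repl_some_stars z (Suc d) (lift k a) (lift k b)"
  by (induction arbitrary: k rule: repl_some_stars.induct) (auto intro: repl_some_stars.intros)

lemma repl_some_stars_subst:
  "repl_some_stars z (Suc d) a b \<Longrightarrow> repl_some_stars z d v w \<Longrightarrow> k \<le> d
    \<Longrightarrow> repl_some_stars z d (subst a k v) (subst b k w)"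
proof (induction "Suc d" a b arbitrary: d k v w rule: repl_some_stars.induct)
  case (Lam a b \<sigma>)
  then show ?case using repl_some_stars_lift[of z d v w 0] by auto
qed (auto intro: repl_some_stars.intros repl_some_stars_refl)

lemma repl_some_stars_unlift:
  "repl_some_stars z (Suc d) a b \<Longrightarrow> k \<le> d \<Longrightarrow> repl_some_stars z d (unlift k a) (unlift k b)"
  by (induction "Suc d" a b arbitrary: d k rule: repl_some_stars.induct)
    (auto intro: repl_some_stars.intros)

lemma loose_repl_some_stars: "repl_some_stars z d a b \<Longrightarrow> loose k b \<Longrightarrow> loose k a"
  by (induction arbitrary: k rule: repl_some_stars.induct) auto

lemma has_ty_repl_some_stars:
  "has_ty \<Gamma> a \<tau> \<Longrightarrow> repl_some_stars z (length \<Gamma>) a b \<Longrightarrow> has_ty \<Gamma> b \<tau>"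
  by (induction arbitrary: b rule: has_ty.induct) (auto intro: has_ty.intros)

fun unrepl_star :: "nat \<Rightarrow> nat \<Rightarrow> trm \<Rightarrow> trm" where
  "unrepl_star z d Star = Star"
| "unrepl_star z d (Var i \<sigma>) = (if i = z + d \<and> \<sigma> = Top then Star else Var i \<sigma>)"
| "unrepl_star z d (Lam \<sigma> t) = Lam \<sigma> (unrepl_star z (Suc d) t)"
| "unrepl_star z d (App u v) = App (unrepl_star z d u) (unrepl_star z d v)"
| "unrepl_star z d (Pair u v) = Pair (unrepl_star z d u) (unrepl_star z d v)"
| "unrepl_star z d (P1 t) = P1 (unrepl_star z d t)"
| "unrepl_star z d (P2 t) = P2 (unrepl_star z d t)"

lemma repl_some_stars_unrepl_star:
  "repl_some_stars z d a b \<Longrightarrow> repl_some_stars z d b (unrepl_star z d a)"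
  by (induction rule: repl_some_stars.induct) (auto intro: repl_some_stars.intros)

lemma repl_some_stars_steps:
  "repl_some_stars z (length \<Gamma>) a b \<Longrightarrow> (step \<Gamma>)\<^sup>*\<^sup>* a b"
proof (induction "length \<Gamma>" a b arbitrary: \<Gamma> rule: repl_some_stars.induct)
  case repl
  have "step \<Gamma> (Var (z + length \<Gamma>) Top) (canon Top)"
    by (rule gentop) (auto intro: has_ty.intros iso_top.intros)
  then show ?case by auto
next
  case (Lam a b \<sigma>)
  then show ?case using Lam.hyps(2)[of "\<sigma> # \<Gamma>"] by (auto intro: steps_Lam)
qed (auto intro: steps_App steps_Pair steps_P1 steps_P2)

definition step_simulated :: "nat \<Rightarrow> ty list \<Rightarrow> trm \<Rightarrow> trm \<Rightarrow> trm \<Rightarrow> bool" where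
  "step_simulated z \<Gamma> a a' b \<longleftrightarrow> (\<exists>b'. repl_some_stars z (length \<Gamma>) a' b' \<and>
     ((step \<Gamma>)\<^sup>+\<^sup>+ b b' \<or>
      b' = b \<and> free_occ_count z Top (length \<Gamma>) a' < free_occ_count z Top (length \<Gamma>) a))"

lemma step_simulatedI:
  "repl_some_stars z (length \<Gamma>) a' b' \<Longrightarrow> step \<Gamma> b b' \<Longrightarrow> step_simulated z \<Gamma> a a' b"
  unfolding step_simulated_def by blast

lemma step_simulated_Lam:
  "step_simulated z (\<sigma> # \<Gamma>) t t' c \<Longrightarrow> step_simulated z \<Gamma> (Lam \<sigma> t) (Lam \<sigma> t') (Lam \<sigma> c)"
  unfolding step_simulated_def by (auto intro: tranclp_map[where f = "Lam \<sigma>"] step.ctx_lam)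

lemma step_simulated_App1:
  "step_simulated z \<Gamma> u u' c \<Longrightarrow> repl_some_stars z (length \<Gamma>) v d
    \<Longrightarrow> step_simulated z \<Gamma> (App u v) (App u' v) (App c d)"
  unfolding step_simulated_def by (auto intro: tranclp_map[where f = "\<lambda>x. App x d"] step.ctx_app1)

lemma step_simulated_App2:
  "repl_some_stars z (length \<Gamma>) u c \<Longrightarrow> step_simulated z \<Gamma> v v' d
    \<Longrightarrow> step_simulated z \<Gamma> (App u v) (App u v') (App c d)"
  unfolding step_simulated_def by (auto intro: tranclp_map[where f = "App c"] step.ctx_app2)

lemma step_simulated_Pair1:
  "step_simulated z \<Gamma> u u' c \<Longrightarrow> repl_some_stars z (length \<Gamma>) v d
    \<Longrightarrow> step_simulated z \<Gamma> (Pair u v) (Pair u' v) (Pair c d)"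
  unfolding step_simulated_def by (auto intro: tranclp_map[where f = "\<lambda>x. Pair x d"] step.ctx_pair1)

lemma step_simulated_Pair2:
  "repl_some_stars z (length \<Gamma>) u c \<Longrightarrow> step_simulated z \<Gamma> v v' d
    \<Longrightarrow> step_simulated z \<Gamma> (Pair u v) (Pair u v') (Pair c d)"
  unfolding step_simulated_def by (auto intro: tranclp_map[where f = "Pair c"] step.ctx_pair2)

lemma step_simulated_P1: "step_simulated z \<Gamma> t t' c \<Longrightarrow> step_simulated z \<Gamma> (P1 t) (P1 t') (P1 c)"
  unfolding step_simulated_def by (auto intro: tranclp_map[where f = P1] step.ctx_p1)

lemma step_simulated_P2: "step_simulated z \<Gamma> t t' c \<Longrightarrow> step_simulated z \<Gamma> (P2 t) (P2 t') (P2 c)"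
  unfolding step_simulated_def by (auto intro: tranclp_map[where f = P2] step.ctx_p2)

lemma step_simulated_sp:
  assumes "repl_some_stars z (length \<Gamma>) (Pair (P1 u) (P2 u)) b"
  shows "step_simulated z \<Gamma> (Pair (P1 u) (P2 u)) u b"
proof -
  let ?u = "unrepl_star z (length \<Gamma>) u"
  txt \<open>The two copies of \<open>u\<close> may be matched by different terms in \<open>b\<close>; both reduce to \<open>?u\<close>.\<close>
  obtain u1 u2 where b: "b = Pair (P1 u1) (P2 u2)"
    and "repl_some_stars z (length \<Gamma>) u u1" "repl_some_stars z (length \<Gamma>) u u2"
    using assms by auto
  then have "repl_some_stars z (length \<Gamma>) u1 ?u" "repl_some_stars z (length \<Gamma>) u2 ?u"
    by (auto intro: repl_some_stars_unrepl_star)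
  then have "(step \<Gamma>)\<^sup>*\<^sup>* b (Pair (P1 ?u) (P2 ?u))"
    unfolding b by (intro steps_Pair steps_P1 steps_P2 repl_some_stars_steps)
  then have "(step \<Gamma>)\<^sup>+\<^sup>+ b ?u"
    using step.sp by (rule rtranclp_into_tranclp1)
  then show ?thesis
    unfolding step_simulated_def using repl_some_stars_unrepl_star[OF repl_some_stars_refl] by blast
qed

lemma step_simulated_gentop:
  assumes "has_ty \<Gamma> u \<tau>" and "iso_top \<tau>" and "u \<noteq> canon \<tau>"
    and "repl_some_stars z (length \<Gamma>) u b"
  shows "step_simulated z \<Gamma> u (canon \<tau>) b"
proof (cases "b = canon \<tau>")
  case True
  then have "free_occ_count z Top (length \<Gamma>) u \<noteq> 0"
    using repl_some_stars_eq assms by blast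
  then have "free_occ_count z Top (length \<Gamma>) (canon \<tau>) < free_occ_count z Top (length \<Gamma>) u"
    by (simp add: free_occ_count_canon)
  then show ?thesis
    unfolding step_simulated_def using True repl_some_stars_refl by blast
next
  case False
  then show ?thesis
    using assms by (blast intro: step_simulatedI repl_some_stars_refl step.gentop has_ty_repl_some_stars)
qed

lemma repl_some_stars_step_simulated:
  "step \<Gamma> a a' \<Longrightarrow> repl_some_stars z (length \<Gamma>) a b \<Longrightarrow> step_simulated z \<Gamma> a a' b"
proof (induction arbitrary: b rule: step.induct)
  case (beta \<Gamma> \<sigma> u v)
  then show ?case by (auto intro: step_simulatedI repl_some_stars_subst step.beta)
next
  case (eta t \<Gamma> \<sigma>)
  then show ?case
    by (fastforce intro: step_simulatedI repl_some_stars_unlift step.eta dest: loose_repl_some_stars)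
next
  case (eta_top \<tau> t \<Gamma>)
  then obtain t' where "b = Lam \<tau> (App t' (canon \<tau>))" and "repl_some_stars z (Suc (length \<Gamma>)) t t'"
    using repl_some_stars_eq free_occ_count_canon by fastforce
  with eta_top show ?case
    by (blast intro: step_simulatedI repl_some_stars_unlift step.eta_top dest: loose_repl_some_stars)
next
  case (sp_top1 \<Gamma> u \<phi> \<tau>)
  then obtain u' where "b = Pair (P1 u') (canon \<tau>)" and "repl_some_stars z (length \<Gamma>) u u'"
    using repl_some_stars_eq free_occ_count_canon by fastforce
  with sp_top1 show ?case by (blast intro: step_simulatedI step.sp_top1 has_ty_repl_some_stars)
next
  case (sp_top2 \<Gamma> u \<tau> \<psi>)
  then obtain u' where "b = Pair (canon \<tau>) (P2 u')" and "repl_some_stars z (length \<Gamma>) u u'"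
    using repl_some_stars_eq free_occ_count_canon by fastforce
  with sp_top2 show ?case by (blast intro: step_simulatedI step.sp_top2 has_ty_repl_some_stars)
qed (auto intro: step_simulatedI step.pi1 step.pi2 step_simulated_sp step_simulated_gentop
    step_simulated_Lam step_simulated_App1 step_simulated_App2 step_simulated_Pair1
    step_simulated_Pair2 step_simulated_P1 step_simulated_P2)

lemma SN_iff_termip: "SN t \<longleftrightarrow> termip red1 t"
  unfolding SN_def by (rule termip_iff_no_infinite_chain[symmetric])

lemma SN_repl_some_stars:
  assumes "SN b" and "repl_some_stars z 0 a b"
  shows "SN a"
proof -
  have "\<exists>b'. repl_some_stars z 0 a' b' \<and>
      (red1\<^sup>+\<^sup>+ b b' \<or> b' = b \<and> free_occ_count z Top 0 a' < free_occ_count z Top 0 a)"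
    if "red1 a a'" and "repl_some_stars z 0 a b" for a a' b
    using repl_some_stars_step_simulated[where \<Gamma> = "[]"] that by (simp add: step_simulated_def)
  then show ?thesis
    using assms unfolding SN_iff_termip by (rule termip_simulation)
qed

lemma reducible_repl_some_stars:
  "repl_some_stars z 0 a b \<Longrightarrow> reducible T b \<Longrightarrow> reducible T a"
proof (induction T arbitrary: a b)
  case (Prod T1 T2)
  then show ?case using Prod.IH(1)[of "P1 a" "P1 b"] Prod.IH(2)[of "P2 a" "P2 b"] by simp
next
  case (Arr T1 T2)
  have "repl_some_stars z 0 (App a u) (App b u)" for u
    using Arr.prems(1) repl_some_stars_refl by (rule repl_some_stars.App)
  then show ?case using Arr.IH(2) Arr.prems(2) by (simp del: repl_some_stars_simps) blast
qed (auto intro: SN_repl_some_stars)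

theorem mainTheorem8:
  fixes t :: trm and T :: ty and z :: nat
  assumes "has_ty [] t T"
    and "\<not> free_occ z Top 0 t"
  shows "(reducible T t \<longrightarrow> reducible T (repl_star z 0 t))
     \<and> reds (repl_star z 0 t) t
     \<and> (atomic T \<longrightarrow> SN t \<longrightarrow> SN (repl_star z 0 t))"
proof (intro conjI impI)
  have repl: "repl_some_stars z (length []) (repl_star z 0 t) t"
    by (simp add: repl_some_stars_repl_star)
  show "reducible T (repl_star z 0 t)" if "reducible T t"
    using reducible_repl_some_stars repl that by simp
  show "reds (repl_star z 0 t) t"
    using repl_some_stars_steps[OF repl] .
  show "SN (repl_star z 0 t)" if "SN t"
    using SN_repl_some_stars repl that by simp
qed

end
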